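(* Let $m\ge4$, $3\le i\le m$, and let $p=(p_1,\dots,p_m)$ be an ordered tuple of distinct points of $\overline{\mathbf H^n_{\mathbb H}}$ with $p_1,\dots,p_i\in\partial\mathbf H^n_{\mathbb H}$ and $p_{i+1},\dots,p_m\in\mathbf H^n_{\mathbb H}$. Suppose the Gram matrix of the lift $\mathbf p=(\mathbf p_1,\dots,\mathbf p_m)$ is semi-normalized, and let $\lambda_1,\dots,\lambda_m$ be nonzero quaternions. Then the Gram matrix of the lift $\mathbf p'=(\mathbf p_1\lambda_1,\dots,\mathbf p_m\lambda_m)$ is semi-normalized if and only if $\lambda_1=\lambda_2=\cdots=\lambda_m$ and $|\lambda_1|=1$.
   Context: $\mathbb H^{n,1}$ is the right quaternionic vector space $\mathbb H^{n+1}$ with Hermitian form $\langle\mathbf z,\mathbf w\rangle=\bar w_{n+1}z_1+\bar w_2z_2+\cdots+\bar w_nz_n+\bar w_1z_{n+1}$; $\mathbf H^n_{\mathbb H}$ (resp. $\partial\mathbf H^n_{\mathbb H}$) consists of quaternionic lines of negative (resp. nonzero null) vectors, and a lift of a point is a spanning vector. The Gram matrix of a lift is $G=(g_{kj})$, $g_{kj}=\langle\mathbf p_j,\mathbf p_k\rangle$; it is semi-normalized if $g_{kk}=0$ for $k\le i$, $g_{kk}=-1$ for $k>i$, $g_{1j}=1$ for $2\le j\le i$, $|g_{23}|=1$, and $g_{1j}$ is a positive real number for $i<j\le m$. *)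

theory Defs
  imports Complex_Main
begin

datatype quat = Quat (qre: real) (qi: real) (qj: real) (qk: real)

instantiation quat :: "{zero, one, plus, minus, uminus, times}"
begin
definition "0 = Quat 0 0 0 0"
definition "1 = Quat 1 0 0 0"
definition "x + y = Quat (qre x + qre y) (qi x + qi y) (qj x + qj y) (qk x + qk y)"
definition "x - y = Quat (qre x - qre y) (qi x - qi y) (qj x - qj y) (qk x - qk y)"
definition "- x = Quat (- qre x) (- qi x) (- qj x) (- qk x)"
definition "x * y = Quat
   (qre x * qre y - qi x * qi y - qj x * qj y - qk x * qk y)
   (qre x * qi y + qi x * qre y + qj x * qk y - qk x * qj y)
   (qre x * qj y - qi x * qk y + qj x * qre y + qk x * qi y)
   (qre x * qk y + qi x * qj y - qj x * qi y + qk x * qre y)"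
instance ..
end

instance quat :: ab_group_add
  by standard (auto simp: zero_quat_def plus_quat_def minus_quat_def uminus_quat_def
      intro: quat.expand)

definition qcnj :: "quat \<Rightarrow> quat" where
  "qcnj x = Quat (qre x) (- qi x) (- qj x) (- qk x)"

definition qnorm :: "quat \<Rightarrow> real" where
  "qnorm x = sqrt (qre x ^ 2 + qi x ^ 2 + qj x ^ 2 + qk x ^ 2)"

definition qpos_real :: "quat \<Rightarrow> bool" where
  "qpos_real x \<longleftrightarrow> qre x > 0 \<and> qi x = 0 \<and> qj x = 0 \<and> qk x = 0"

text \<open>Vectors of \<open>\<bbbH>\<^sup>n\<^sup>+\<^sup>1\<close> are functions \<open>nat \<Rightarrow> quat\<close>; only the
coordinates \<open>1..n+1\<close> are relevant.\<close>
type_synonym qvec = "nat \<Rightarrow> quat"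

definition rscale :: "qvec \<Rightarrow> quat \<Rightarrow> qvec" where
  "rscale z l = (\<lambda>k. z k * l)"

definition herm :: "nat \<Rightarrow> qvec \<Rightarrow> qvec \<Rightarrow> quat" where
  "herm n z w = qcnj (w (n+1)) * z 1 + (\<Sum>k\<in>{2..n}. qcnj (w k) * z k) + qcnj (w 1) * z (n+1)"

definition qvec_nonzero :: "nat \<Rightarrow> qvec \<Rightarrow> bool" where
  "qvec_nonzero n z \<longleftrightarrow> (\<exists>k\<in>{1..n+1}. z k \<noteq> 0)"

definition same_line :: "nat \<Rightarrow> qvec \<Rightarrow> qvec \<Rightarrow> bool" where
  "same_line n z w \<longleftrightarrow> (\<exists>l. \<forall>k\<in>{1..n+1}. z k = w k * l)"

text \<open>\<open>z\<close> lifts a point of the boundary (nonzero null vector) resp. of the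
  interior (negative vector) of quaternionic hyperbolic space.\<close>
definition lifts_boundary_point :: "nat \<Rightarrow> qvec \<Rightarrow> bool" where
  "lifts_boundary_point n z \<longleftrightarrow> qvec_nonzero n z \<and> herm n z z = 0"

definition lifts_interior_point :: "nat \<Rightarrow> qvec \<Rightarrow> bool" where
  "lifts_interior_point n z \<longleftrightarrow> qre (herm n z z) < 0"

definition gram :: "nat \<Rightarrow> (nat \<Rightarrow> qvec) \<Rightarrow> nat \<Rightarrow> nat \<Rightarrow> quat" where
  "gram n p k j = herm n (p j) (p k)"

definition semi_normalized :: "nat \<Rightarrow> nat \<Rightarrow> nat \<Rightarrow> (nat \<Rightarrow> qvec) \<Rightarrow> bool" where
  "semi_normalized n m i p \<longleftrightarrow>
     (\<forall>k\<in>{1..i}. gram n p k k = 0) \<and>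
     (\<forall>k\<in>{i<..m}. gram n p k k = - 1) \<and>
     (\<forall>j\<in>{2..i}. gram n p 1 j = 1) \<and>
     qnorm (gram n p 2 3) = 1 \<and>
     (\<forall>j\<in>{i<..m}. qpos_real (gram n p 1 j))"

end

theory Submission
  imports Defs
begin

text \<open>Rescaling the lift by \<open>\<lambda>\<^sub>j\<close> turns the Gram entry \<open>g\<^sub>k\<^sub>j\<close> into
  \<open>\<lambda>\<^sub>k\<^sup>* g\<^sub>k\<^sub>j \<lambda>\<^sub>j\<close>. The conditions \<open>g\<^sub>1\<^sub>j = 1\<close> for \<open>2 \<le> j \<le> i\<close> force
  \<open>\<lambda>\<^sub>1\<^sup>* \<lambda>\<^sub>j = 1\<close>, so \<open>|\<lambda>\<^sub>1| |\<lambda>\<^sub>j| = 1\<close>; together with \<open>|g\<^sub>2\<^sub>3| = 1\<close> this gives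
  \<open>|\<lambda>\<^sub>1| = 1\<close> and then \<open>\<lambda>\<^sub>j = \<lambda>\<^sub>1\<close>. For an interior point \<open>j\<close>, \<open>g\<^sub>j\<^sub>j = -1\<close> makes
  \<open>\<lambda>\<^sub>j\<close> a unit, and positivity of \<open>g\<^sub>1\<^sub>j\<close> makes the unit \<open>\<lambda>\<^sub>1\<^sup>* \<lambda>\<^sub>j\<close> a positive
  real, hence \<open>1\<close>. Conversely, conjugation by a unit fixes real quaternions.\<close>

instance quat :: ring_1
  by standard (auto simp: zero_quat_def one_quat_def plus_quat_def times_quat_def
      algebra_simps intro!: quat.expand)

lemma quat_eq_iff: "x = y \<longleftrightarrow> qre x = qre y \<and> qi x = qi y \<and> qj x = qj y \<and> qk x = qk y"
  by (auto intro: quat.expand)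

definition qof_real :: "real \<Rightarrow> quat" where
  "qof_real r = Quat r 0 0 0"

lemma qof_real_1 [simp]: "qof_real 1 = 1"
  by (simp add: qof_real_def one_quat_def)

lemma qof_real_mult_commute: "qof_real r * a = a * qof_real r"
  by (simp add: qof_real_def times_quat_def quat_eq_iff)

lemma qpos_real_iff: "qpos_real x \<longleftrightarrow> (\<exists>r>0. x = qof_real r)"
  by (auto simp: qpos_real_def qof_real_def quat_eq_iff)

lemma qpos_real_qof_real_mult_iff:
  assumes "0 < r"
  shows "qpos_real (qof_real r * u) \<longleftrightarrow> qpos_real u"
  using assms by (simp add: qpos_real_def qof_real_def times_quat_def zero_less_mult_iff)

lemma qcnj_mult: "qcnj (a * b) = qcnj b * qcnj a"
  by (simp add: qcnj_def times_quat_def quat_eq_iff algebra_simps)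

lemma qnorm_mult: "qnorm (a * b) = qnorm a * qnorm b"
  unfolding qnorm_def real_sqrt_mult[symmetric]
  by (rule arg_cong[where f = sqrt]) (simp add: times_quat_def algebra_simps power2_eq_square)

lemma qnorm_qcnj [simp]: "qnorm (qcnj a) = qnorm a"
  by (simp add: qnorm_def qcnj_def)

lemma qnorm_one [simp]: "qnorm 1 = 1"
  by (simp add: qnorm_def one_quat_def)

lemma qcnj_mult_self: "qcnj a * a = qof_real ((qnorm a)\<^sup>2)"
  by (simp add: qcnj_def times_quat_def qnorm_def qof_real_def quat_eq_iff
      algebra_simps power2_eq_square)

lemma mult_qcnj_self: "a * qcnj a = qof_real ((qnorm a)\<^sup>2)"
  by (simp add: qcnj_def times_quat_def qnorm_def qof_real_def quat_eq_iff
      algebra_simps power2_eq_square)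

lemma qnorm_nonneg: "0 \<le> qnorm a"
  by (simp add: qnorm_def)

lemma qnorm_eq_1_iff_qcnj_mult_self: "qnorm a = 1 \<longleftrightarrow> qcnj a * a = 1"
proof
  assume "qcnj a * a = 1"
  then have "qnorm (qcnj a * a) = 1"
    by simp
  then have "(qnorm a)\<^sup>2 = 1"
    by (simp add: qnorm_mult power2_eq_square)
  then show "qnorm a = 1"
    using qnorm_nonneg[of a] by (simp add: power2_eq_1_iff)
qed (simp add: qcnj_mult_self)

lemma qcnj_mult_eq_1_imp_eq:
  assumes "qnorm a = 1" and "qcnj a * b = 1"
  shows "b = a"
proof -
  have "b = (a * qcnj a) * b"
    using assms(1) by (simp add: mult_qcnj_self)
  also have "\<dots> = a"
    using assms(2) by (simp add: mult.assoc)
  finally show ?thesis .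
qed

lemma unit_qpos_real_eq_1:
  assumes "qnorm u = 1" and "qpos_real u"
  shows "u = 1"
proof -
  have "(qre u)\<^sup>2 = 1"
    using assms by (simp add: qnorm_def qpos_real_def)
  then have "qre u = 1"
    using assms(2) by (auto simp: qpos_real_def power2_eq_1_iff)
  then show ?thesis
    using assms(2) by (simp add: qpos_real_def one_quat_def quat_eq_iff)
qed

lemma unit_conj_qof_real:
  assumes "qnorm l = 1"
  shows "qcnj l * qof_real r * l = qof_real r"
proof -
  have "qcnj l * qof_real r * l = qof_real r * (qcnj l * l)"
    by (simp add: qof_real_mult_commute mult.assoc)
  then show ?thesis
    using assms by (simp add: qnorm_eq_1_iff_qcnj_mult_self)
qed

lemma herm_rscale: "herm n (rscale z a) (rscale w b) = qcnj b * herm n z w * a"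
proof -
  have "qcnj (w k * b) * (z l * a) = qcnj b * (qcnj (w k) * z l) * a" for k l
    by (simp add: qcnj_mult mult.assoc)
  then show ?thesis
    unfolding herm_def rscale_def
    by (simp add: sum_distrib_left sum_distrib_right distrib_left distrib_right)
qed

lemma gram_rscale:
  "gram n (\<lambda>j. rscale (p j) (lam j)) k j = qcnj (lam k) * gram n p k j * lam j"
  by (simp add: gram_def herm_rscale)

lemma semi_normalized_rscale_unit:
  assumes "semi_normalized n m i p" and "i \<le> m" and "3 \<le> m"
    and "\<forall>j\<in>{1..m}. lam j = l" and "qnorm l = 1"
  shows "semi_normalized n m i (\<lambda>j. rscale (p j) (lam j))"
proof -
  have gram_eq: "gram n (\<lambda>j. rscale (p j) (lam j)) k j = qcnj l * gram n p k j * l"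
    if "k \<in> {1..m}" "j \<in> {1..m}" for k j
    using assms(4) that by (simp add: gram_rscale)
  have unit: "qcnj l * l = 1"
    using assms(5) by (simp add: qnorm_eq_1_iff_qcnj_mult_self)
  have fixes_qpos_real: "qpos_real x \<Longrightarrow> qcnj l * x * l = x" for x
    using unit_conj_qof_real[OF assms(5)] by (auto simp: qpos_real_iff)
  show ?thesis
    using assms(1-3) unfolding semi_normalized_def
    by (auto simp: gram_eq unit fixes_qpos_real qnorm_mult assms(5))
qed

lemma semi_normalized_rscale_boundary_eq:
  assumes "semi_normalized n m i p" and "semi_normalized n m i (\<lambda>j. rscale (p j) (lam j))"
    and "3 \<le> i"
  shows "qnorm (lam 1) = 1" and "\<forall>j\<in>{2..i}. lam j = lam 1"
proof -
  have unit_pair: "qcnj (lam 1) * lam j = 1" if "j \<in> {2..i}" for j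
    using assms(1,2) that by (auto simp: semi_normalized_def gram_rscale)
  have norms: "qnorm (lam 1) * qnorm (lam j) = 1" if "j \<in> {2..i}" for j
    using arg_cong[where f = qnorm, OF unit_pair[OF that]] by (simp add: qnorm_mult)
  have "qnorm (lam 2) * qnorm (lam 3) = 1"
    using assms(1,2) by (simp add: semi_normalized_def gram_rscale qnorm_mult)
  moreover have "qnorm (lam 1) * qnorm (lam 2) = 1" "qnorm (lam 1) * qnorm (lam 3) = 1"
    using norms assms(3) by auto
  ultimately have "(qnorm (lam 1))\<^sup>2 = 1"
    by (metis mult.commute mult.left_commute mult_1_right power2_eq_square)
  then show unit: "qnorm (lam 1) = 1"
    using qnorm_nonneg[of "lam 1"] by (simp add: power2_eq_1_iff)
  show "\<forall>j\<in>{2..i}. lam j = lam 1"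
    using qcnj_mult_eq_1_imp_eq[OF unit] unit_pair by blast
qed

lemma semi_normalized_rscale_interior_eq:
  assumes "semi_normalized n m i p" and "semi_normalized n m i (\<lambda>j. rscale (p j) (lam j))"
    and "qnorm (lam 1) = 1" and "j \<in> {i<..m}"
  shows "lam j = lam 1"
proof -
  have "qcnj (lam j) * (- 1) * lam j = - 1"
    using assms(1,2,4) by (simp add: semi_normalized_def gram_rscale)
  then have unit_j: "qnorm (lam j) = 1"
    by (simp add: qnorm_eq_1_iff_qcnj_mult_self)
  have "qpos_real (gram n p 1 j)"
    using assms(1,4) by (simp add: semi_normalized_def)
  then obtain r where r: "0 < r" "gram n p 1 j = qof_real r"
    by (auto simp: qpos_real_iff)
  have "qpos_real (gram n (\<lambda>j. rscale (p j) (lam j)) 1 j)"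
    using assms(2,4) unfolding semi_normalized_def by blast
  then have "qpos_real (qcnj (lam 1) * qof_real r * lam j)"
    by (simp only: gram_rscale r(2))
  moreover have "qcnj (lam 1) * qof_real r * lam j = qof_real r * (qcnj (lam 1) * lam j)"
    by (simp add: qof_real_mult_commute mult.assoc)
  ultimately have "qpos_real (qcnj (lam 1) * lam j)"
    by (simp add: qpos_real_qof_real_mult_iff[OF r(1)])
  moreover have "qnorm (qcnj (lam 1) * lam j) = 1"
    using assms(3) unit_j by (simp add: qnorm_mult)
  ultimately have "qcnj (lam 1) * lam j = 1"
    using unit_qpos_real_eq_1 by blast
  then show ?thesis
    using qcnj_mult_eq_1_imp_eq[OF assms(3)] by blast
qed

theorem lemma8p5:
  fixes n m i :: nat and p :: "nat \<Rightarrow> qvec" and lam :: "nat \<Rightarrow> quat"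
  assumes "n \<ge> 1" and "m \<ge> 4" and "3 \<le> i" and "i \<le> m"
    and "\<forall>j\<in>{1..i}. lifts_boundary_point n (p j)"
    and "\<forall>j\<in>{i<..m}. lifts_interior_point n (p j)"
    and "\<forall>j\<in>{1..m}. \<forall>k\<in>{1..m}. j \<noteq> k \<longrightarrow> \<not> same_line n (p j) (p k)"
    and "semi_normalized n m i p"
    and "\<forall>j\<in>{1..m}. lam j \<noteq> 0"
  shows "semi_normalized n m i (\<lambda>j. rscale (p j) (lam j)) \<longleftrightarrow>
           (\<forall>j\<in>{1..m}. lam j = lam 1) \<and> qnorm (lam 1) = 1"
proof
  assume rescaled: "semi_normalized n m i (\<lambda>j. rscale (p j) (lam j))"
  note boundary = semi_normalized_rscale_boundary_eq[OF assms(8) rescaled assms(3)]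
  have "lam j = lam 1" if j: "j \<in> {1..m}" for j
  proof -
    consider "j = 1" | "j \<in> {2..i}" | "j \<in> {i<..m}"
      using j by fastforce
    then show ?thesis
      by cases
        (use boundary semi_normalized_rscale_interior_eq[OF assms(8) rescaled boundary(1)] in auto)
  qed
  then show "(\<forall>j\<in>{1..m}. lam j = lam 1) \<and> qnorm (lam 1) = 1"
    using boundary(1) by blast
next
  assume "(\<forall>j\<in>{1..m}. lam j = lam 1) \<and> qnorm (lam 1) = 1"
  moreover have "3 \<le> m"
    using assms(2) by simp
  ultimately show "semi_normalized n m i (\<lambda>j. rscale (p j) (lam j))"
    using semi_normalized_rscale_unit[OF assms(8) assms(4)] by blast
qed

end
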